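(* For every positive integer $n$, $$\iota(2^n-1)\leq 2n-1-\left\lfloor \frac{n-1}{2^{\lfloor \frac{\log n}{\log 2}\rfloor}}\right\rfloor-\left\lfloor \frac{\log n}{\log 2}\right\rfloor+\iota(n).$$
   Context: An addition chain producing $N$ is a sequence $1,2,s_3,\ldots,s_k=N$ in which every term after the first is the sum of two (not necessarily distinct) earlier terms; its length is the number of terms excluding the initial $1$. $\iota(N)$ denotes the length of the shortest addition chain producing $N$. $\lfloor\cdot\rfloor$ is the floor function and $\log$ the natural logarithm. *)

theory Defs
  imports Complex_Main
begin

definition addition_chain :: "nat list \<Rightarrow> bool" where
  "addition_chain c \<longleftrightarrow> c \<noteq> [] \<and> c ! 0 = 1 \<and>
     (\<forall>i. 0 < i \<and> i < length c \<longrightarrow> (\<exists>j k. j < i \<and> k < i \<and> c ! i = c ! j + c ! k))"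

definition chain_length :: "nat list \<Rightarrow> nat" where
  "chain_length c = length c - 1"

definition iota :: "nat \<Rightarrow> nat" where
  "iota N = (LEAST k. \<exists>c. addition_chain c \<and> last c = N \<and> chain_length c = k)"

end

theory Submission
  imports Defs "HOL-Library.Discrete_Functions"
begin

text \<open>The chain 1, 2, 3, 6, 7, 14, 15, ..., 2^n - 2, 2^n - 1 alternately doubles and adds
  the initial 1, so \<open>\<iota>(2^n - 1) \<le> 2n - 2\<close>. Conversely no step of a chain more than doubles,
  so \<open>n \<le> 2^\<iota>(n)\<close> and \<open>\<lfloor>log\<^sub>2 n\<rfloor> \<le> \<iota>(n)\<close>; and since \<open>n - 1 < 2 \<cdot> 2^\<lfloor>log\<^sub>2 n\<rfloor>\<close>, the
  first floor term is at most 1. Hence the right-hand side is at least 2n - 2.\<close>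

lemma addition_chain_snoc:
  assumes "addition_chain c" "j < length c" "k < length c"
  shows "addition_chain (c @ [c ! j + c ! k])"
  unfolding addition_chain_def
proof (intro conjI allI impI)
  let ?d = "c @ [c ! j + c ! k]"
  have "c \<noteq> []" "c ! 0 = 1" using assms(1) unfolding addition_chain_def by simp_all
  then show "?d \<noteq> []" "?d ! 0 = 1" by (simp_all add: nth_append)
  fix i assume i: "0 < i \<and> i < length ?d"
  show "\<exists>j' k'. j' < i \<and> k' < i \<and> ?d ! i = ?d ! j' + ?d ! k'"
  proof (cases "i < length c")
    case True
    then obtain j' k' where "j' < i" "k' < i" "c ! i = c ! j' + c ! k'"
      using assms(1) i unfolding addition_chain_def by blast
    moreover from this True have "?d ! i = ?d ! j' + ?d ! k'" by (simp add: nth_append)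
    ultimately show ?thesis by blast
  next
    case False
    with i have "i = length c" by simp
    with assms(2,3) have "j < i" "k < i" "?d ! i = ?d ! j + ?d ! k" by (simp_all add: nth_append)
    then show ?thesis by blast
  qed
qed

lemma addition_chain_snoc_double_last:
  assumes "addition_chain c"
  shows "addition_chain (c @ [2 * last c])"
proof -
  have "c \<noteq> []" using assms unfolding addition_chain_def by simp
  then have "length c - 1 < length c" "c ! (length c - 1) + c ! (length c - 1) = 2 * last c"
    by (simp_all add: last_conv_nth)
  with addition_chain_snoc[OF assms] show ?thesis by metis
qed

lemma addition_chain_snoc_Suc_last:
  assumes "addition_chain c"
  shows "addition_chain (c @ [last c + 1])"
proof -
  have "c \<noteq> []" "c ! 0 = 1" using assms unfolding addition_chain_def by simp_all
  then have "length c - 1 < length c" "0 < length c" "c ! (length c - 1) + c ! 0 = last c + 1"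
    by (simp_all add: last_conv_nth)
  with addition_chain_snoc[OF assms] show ?thesis by metis
qed

lemma addition_chain_nth_le_power:
  assumes "addition_chain c" "i < length c"
  shows "c ! i \<le> 2 ^ i"
  using assms(2)
proof (induction i rule: less_induct)
  case (less i)
  show ?case
  proof (cases "i = 0")
    case True
    with assms(1) show ?thesis unfolding addition_chain_def by simp
  next
    case False
    then obtain j k where jk: "j < i" "k < i" "c ! i = c ! j + c ! k"
      using assms(1) less.prems unfolding addition_chain_def by blast
    have earlier: "c ! m \<le> 2 ^ (i - 1)" if "m < i" for m
    proof -
      have "c ! m \<le> 2 ^ m" using less.IH less.prems that by simp
      also have "\<dots> \<le> 2 ^ (i - 1)" using that by (intro power_increasing) auto
      finally show ?thesis .
    qed
    have "c ! j \<le> 2 ^ (i - 1)" "c ! k \<le> 2 ^ (i - 1)" using earlier jk by simp_all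
    moreover have "(2::nat) ^ i = 2 ^ (i - 1) + 2 ^ (i - 1)"
      using False by (metis mult_2 power_eq_if)
    ultimately show ?thesis using jk by linarith
  qed
qed

lemma last_le_power_chain_length:
  assumes "addition_chain c"
  shows "last c \<le> 2 ^ chain_length c"
proof -
  have "c \<noteq> []" using assms unfolding addition_chain_def by simp
  then show ?thesis
    using addition_chain_nth_le_power[OF assms, of "length c - 1"]
    by (simp add: last_conv_nth chain_length_def)
qed

lemma addition_chain_upt:
  assumes "n \<ge> 1"
  shows "addition_chain [1..<Suc n]"
  unfolding addition_chain_def
proof (intro conjI allI impI)
  show "[1..<Suc n] \<noteq> []" "[1..<Suc n] ! 0 = 1" using assms by (simp_all del: upt_Suc)
  fix i assume i: "0 < i \<and> i < length [1..<Suc n]"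
  then have "[1..<Suc n] ! i = [1..<Suc n] ! (i - 1) + [1..<Suc n] ! 0"
    by (simp del: upt_Suc)
  with i show "\<exists>j k. j < i \<and> k < i \<and> [1..<Suc n] ! i = [1..<Suc n] ! j + [1..<Suc n] ! k"
    by (metis diff_less zero_less_one)
qed

lemma iota_le_chain_length:
  assumes "addition_chain c"
  shows "iota (last c) \<le> chain_length c"
  unfolding iota_def using assms by (intro Least_le) blast

lemma iota_attained:
  assumes "n \<ge> 1"
  obtains c where "addition_chain c" "last c = n" "chain_length c = iota n"
proof -
  have "last [1..<Suc n] = n" using assms by simp
  then have "\<exists>k c. addition_chain c \<and> last c = n \<and> chain_length c = k"
    using addition_chain_upt[OF assms] by blast
  from LeastI_ex[OF this] show ?thesis
    using that unfolding iota_def by blast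
qed

lemma le_power_iota:
  assumes "n \<ge> 1"
  shows "n \<le> 2 ^ iota n"
proof -
  obtain c where "addition_chain c" "last c = n" "chain_length c = iota n"
    using iota_attained[OF assms] .
  with last_le_power_chain_length show ?thesis by metis
qed

lemma floor_log_le_iota:
  assumes "n \<ge> 1"
  shows "floor_log n \<le> iota n"
proof -
  have "2 ^ floor_log n \<le> n" using assms by (simp add: floor_log_exp2_le)
  also have "\<dots> \<le> 2 ^ iota n" using le_power_iota[OF assms] .
  finally show ?thesis by simp
qed

fun mersenne_chain :: "nat \<Rightarrow> nat list" where
  "mersenne_chain 0 = [1]"
| "mersenne_chain (Suc k) =
     mersenne_chain k @ [2 * last (mersenne_chain k), 2 * last (mersenne_chain k) + 1]"

lemma addition_chain_mersenne_chain: "addition_chain (mersenne_chain k)"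
proof (induction k)
  case 0
  show ?case by (auto simp: addition_chain_def)
next
  case (Suc k)
  show ?case
    using addition_chain_snoc_Suc_last[OF addition_chain_snoc_double_last[OF Suc.IH]] by simp
qed

lemma length_mersenne_chain: "length (mersenne_chain k) = 2 * k + 1"
  by (induction k) simp_all

lemma chain_length_mersenne_chain: "chain_length (mersenne_chain k) = 2 * k"
  by (simp add: chain_length_def length_mersenne_chain)

lemma Suc_last_mersenne_chain: "Suc (last (mersenne_chain k)) = 2 ^ Suc k"
  by (induction k) simp_all

lemma iota_mersenne_le:
  assumes "n \<ge> 1"
  shows "iota (2 ^ n - 1) \<le> 2 * n - 2"
proof -
  have "last (mersenne_chain (n - 1)) = 2 ^ n - 1"
    using Suc_last_mersenne_chain[of "n - 1"] assms by simp
  then show ?thesis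
    using iota_le_chain_length[OF addition_chain_mersenne_chain, of "n - 1"]
    by (simp add: chain_length_mersenne_chain)
qed

lemma pred_div_exp2_floor_log_le_1: "(n - 1) div 2 ^ floor_log n \<le> 1"
proof -
  have "n - 1 < 2 * 2 ^ floor_log n" using floor_log_exp2_gt[of n] by simp
  then have "(n - 1) div 2 ^ floor_log n < 2" by (simp add: div_less_iff_less_mult mult.commute)
  then show ?thesis by simp
qed

lemma floor_log2_eq_floor_log:
  assumes "n \<ge> 1"
  shows "\<lfloor>log 2 (real n)\<rfloor> = int (floor_log n)"
proof -
  have "0 \<le> \<lfloor>log 2 (real n)\<rfloor>" using assms by simp
  then show ?thesis using assms by (subst floor_log_altdef) simp
qed

theorem mainTheorem12:
  fixes n :: nat
  assumes "n \<ge> 1"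
  shows "int (iota (2 ^ n - 1)) \<le>
           2 * int n - 1
           - \<lfloor>real (n - 1) / 2 powr real_of_int \<lfloor>ln (real n) / ln 2\<rfloor>\<rfloor>
           - \<lfloor>ln (real n) / ln 2\<rfloor>
           + int (iota n)"
proof -
  have log: "\<lfloor>ln (real n) / ln 2\<rfloor> = int (floor_log n)"
    using floor_log2_eq_floor_log[OF assms] by (simp add: log_def)
  have "2 powr real_of_int (int (floor_log n)) = real (2 ^ floor_log n)"
    by (simp add: powr_realpow)
  then have div: "\<lfloor>real (n - 1) / 2 powr real_of_int (int (floor_log n))\<rfloor> =
      int ((n - 1) div 2 ^ floor_log n)"
    by (simp only: floor_divide_of_nat_eq)
  show ?thesis
    unfolding log div
    using iota_mersenne_le[OF assms] pred_div_exp2_floor_log_le_1[of n]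
      floor_log_le_iota[OF assms] assms
    by linarith
qed

end
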